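(* Algorithm SOMA has a speed-up bound of $4/3$: every dual-criticality implicit-deadline sporadic task system that is MC-schedulable by some scheduling algorithm on $m$ unit-speed processors is declared schedulable (success) by SOMA on $m$ processors each of speed $4/3$.
   Context: Task system $\tau$ on $m$ identical processors; each task $\tau_i$ has period/deadline $T_i>0$, criticality in $\{LO,HI\}$, WCETs $C_i^L\le C_i^H$ ($=$ for LO-tasks), $u_i^L=C_i^L/T_i\le1$, $u_i^H=C_i^H/T_i\le1$; $\tau_L$, $\tau_H$ the LO- and HI-tasks, $n_H=|\tau_H|$. The system starts in LO-mode and switches to HI-mode the first time a HI-job of $\tau_i$ executes $C_i^L$ units without completing; LO-jobs are then dropped. MC-schedulable: every job receives $C_i^L$ by its deadline in LO-mode and every HI-job receives $C_i^H$ by its deadline in HI-mode. A multi-rate assignment consists of $\theta_i^L$ ($\tau_i\in\tau$), $\theta_{i,j}^H$, $\theta_i^H$ ($\tau_i\in\tau_H$, $1\le j\le n_H$) and $w_j$ ($1\le j\le n_H$). Given indices $k_i\in\{1,\dots,n_H+1\}$, with $R_i=\theta_{i,k_i}^H$ if $k_i\le n_H$ and $R_i=\theta_i^H$ otherwise and $\theta_{i,n_H+1}^H:=\theta_i^H$, the conditions are: (S1) $\theta_i^L\ge u_i^L$ for all $\tau_i\in\tau$; (S3) $\sum_{\tau_H}\theta_{i,j}^H\le m$ for all $j$ and $\sum_{\tau_H}\theta_i^H\le m$; (S4) for all $\tau_i\in\tau_H$: $\sum_{j<k_i}\theta_{i,j}^Hw_j+R_i(T_i-C_i^L/\theta_i^L-\sum_{j<k_i}w_j)\ge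 C_i^H-C_i^L$, $\theta_i^L\le\theta_{i,j}^H$ for $k_i\le j\le n_H$, $\theta_i^L\le\theta_i^H$; (S5) for all $\tau_i\in\tau_H$: $\sum_{j<k_i}\theta_{i,j}^Hw_j\ge u_i^H\sum_{j<k_i}w_j$, $\theta_{i,j}^H\le\theta_{i,j+1}^H$ for $1\le j<k_i$, $\theta_{i,j}^H\ge u_i^H$ for $k_i\le j\le n_H$, $\theta_i^H\ge u_i^H$. Algorithm SOMA: (1) set $\theta_i^L=u_i^L$ for every $\tau_i\in\tau_L$; (2) index the HI-tasks $1,\dots,n_H$ in increasing order of $T_i-C_i^L/u_i^H$ and set $k_i=i$; (3) solve the optimization problem: minimize $\sum_{\tau_i\in\tau_H}\theta_i^L$ subject to (S1), (S3), (S4), (S5) with these fixed $k_i$, together with $\theta_{i,j}^H\le1$, $\theta_i^H\le1$ for all $i,j$ and $w_j\ge0$ for all $j$; (4) if an optimal assignment is returned and $\sum_{\tau_i\in\tau}\theta_i^L\le m$, declare success; otherwise declare failure. On processors of speed $s$, this is applied with all execution times $C_i^L,C_i^H$ divided by $s$. *)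

theory Defs
  imports "HOL-Analysis.Analysis"
begin

datatype crit = LO | HI

text \<open>Tasks are indexed by elements of a finite set tau.  A job is a pair (i, r):
  task index i and release time r; its deadline is r + T i.\<close>

definition legal_arrivals :: "'a set \<Rightarrow> ('a \<Rightarrow> real) \<Rightarrow> ('a \<Rightarrow> real set) \<Rightarrow> bool" where
  "legal_arrivals tau T R \<longleftrightarrow>
     (\<forall>i. R i \<subseteq> {0..}) \<and> (\<forall>i. i \<notin> tau \<longrightarrow> R i = {}) \<and>
     (\<forall>i\<in>tau. \<forall>r\<in>R i. \<forall>r'\<in>R i. r \<noteq> r' \<longrightarrow> T i \<le> \<bar>r - r'\<bar>)"

definition legal_scenario :: "('a \<Rightarrow> crit) \<Rightarrow> ('a \<Rightarrow> real) \<Rightarrow> ('a \<Rightarrow> real)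
    \<Rightarrow> ('a \<Rightarrow> real set) \<Rightarrow> ('a \<times> real \<Rightarrow> real) \<Rightarrow> bool" where
  "legal_scenario crit CL CH R c \<longleftrightarrow>
     (\<forall>i r. r \<in> R i \<longrightarrow> 0 < c (i, r) \<and> c (i, r) \<le> (if crit i = HI then CH i else CL i))"

text \<open>A schedule on m unit-speed processors: sched t p is the job run on processor p at time t.\<close>

definition run_set :: "(real \<Rightarrow> nat \<Rightarrow> ('a \<times> real) option) \<Rightarrow> nat \<Rightarrow> 'a \<times> real \<Rightarrow> real set" where
  "run_set sched m j = {t. \<exists>p<m. sched t p = Some j}"

definition exec :: "(real \<Rightarrow> nat \<Rightarrow> ('a \<times> real) option) \<Rightarrow> nat \<Rightarrow> 'a \<times> real \<Rightarrow> real \<Rightarrow> real \<Rightarrow> real" where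
  "exec sched m j a b = measure lebesgue ({a..b} \<inter> run_set sched m j)"

definition valid_schedule :: "nat \<Rightarrow> ('a \<Rightarrow> real set) \<Rightarrow> ('a \<times> real \<Rightarrow> real)
    \<Rightarrow> (real \<Rightarrow> nat \<Rightarrow> ('a \<times> real) option) \<Rightarrow> bool" where
  "valid_schedule m R c sched \<longleftrightarrow>
     (\<forall>t p i r. p < m \<longrightarrow> sched t p = Some (i, r) \<longrightarrow> r \<in> R i \<and> r \<le> t) \<and>
     (\<forall>t p q. p < m \<longrightarrow> q < m \<longrightarrow> sched t p \<noteq> None \<longrightarrow> sched t p = sched t q \<longrightarrow> p = q) \<and>
     (\<forall>j. run_set sched m j \<in> sets lebesgue) \<and>
     (\<forall>i r t. r \<in> R i \<longrightarrow> exec sched m (i, r) 0 t \<le> c (i, r))"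

definition switched :: "('a \<Rightarrow> crit) \<Rightarrow> ('a \<Rightarrow> real) \<Rightarrow> ('a \<Rightarrow> real set) \<Rightarrow> ('a \<times> real \<Rightarrow> real)
    \<Rightarrow> (real \<Rightarrow> nat \<Rightarrow> ('a \<times> real) option) \<Rightarrow> nat \<Rightarrow> real \<Rightarrow> bool" where
  "switched crit CL R c sched m t \<longleftrightarrow>
     (\<exists>i r. r \<in> R i \<and> crit i = HI \<and> CL i < c (i, r) \<and> CL i \<le> exec sched m (i, r) 0 t)"

definition mc_correct :: "('a \<Rightarrow> crit) \<Rightarrow> ('a \<Rightarrow> real) \<Rightarrow> ('a \<Rightarrow> real) \<Rightarrow> ('a \<Rightarrow> real set)
    \<Rightarrow> ('a \<times> real \<Rightarrow> real) \<Rightarrow> (real \<Rightarrow> nat \<Rightarrow> ('a \<times> real) option) \<Rightarrow> nat \<Rightarrow> bool" where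
  "mc_correct crit T CL R c sched m \<longleftrightarrow>
     (\<forall>i r. r \<in> R i \<longrightarrow> (\<forall>t < r + T i. \<not> switched crit CL R c sched m t) \<longrightarrow>
        min (c (i, r)) (CL i) \<le> exec sched m (i, r) 0 (r + T i)) \<and>
     (\<forall>i r. r \<in> R i \<longrightarrow> crit i = HI \<longrightarrow> c (i, r) \<le> exec sched m (i, r) 0 (r + T i))"

definition MC_schedulable :: "'a set \<Rightarrow> ('a \<Rightarrow> crit) \<Rightarrow> ('a \<Rightarrow> real) \<Rightarrow> ('a \<Rightarrow> real)
    \<Rightarrow> ('a \<Rightarrow> real) \<Rightarrow> nat \<Rightarrow> bool" where
  "MC_schedulable tau crit T CL CH m \<longleftrightarrow>
     (\<forall>R c. legal_arrivals tau T R \<longrightarrow> legal_scenario crit CL CH R c \<longrightarrow>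
        (\<exists>sched. valid_schedule m R c sched \<and> mc_correct crit T CL R c sched m))"

definition soma_feasible :: "'a set \<Rightarrow> ('a \<Rightarrow> crit) \<Rightarrow> ('a \<Rightarrow> real) \<Rightarrow> ('a \<Rightarrow> real) \<Rightarrow> ('a \<Rightarrow> real)
    \<Rightarrow> nat \<Rightarrow> ('a \<Rightarrow> nat) \<Rightarrow> ('a \<Rightarrow> real) \<Rightarrow> ('a \<Rightarrow> nat \<Rightarrow> real) \<Rightarrow> ('a \<Rightarrow> real)
    \<Rightarrow> (nat \<Rightarrow> real) \<Rightarrow> bool" where
  "soma_feasible tau crit T CL CH m k thL thH thF w \<longleftrightarrow>
   (let tH = {i\<in>tau. crit i = HI}; n = card tH;
        uL = (\<lambda>i. CL i / T i); uH = (\<lambda>i. CH i / T i);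
        th = (\<lambda>i j. if j \<le> n then thH i j else thF i);
        Rr = (\<lambda>i. th i (k i)) in
    (\<forall>i\<in>tau. crit i = LO \<longrightarrow> thL i = uL i) \<and>
    (\<forall>i\<in>tau. uL i \<le> thL i) \<and>
    (\<forall>j\<in>{1..n}. (\<Sum>i\<in>tH. thH i j) \<le> real m) \<and> (\<Sum>i\<in>tH. thF i) \<le> real m \<and>
    (\<forall>i\<in>tH.
        CH i - CL i \<le> (\<Sum>j\<in>{1..<k i}. thH i j * w j)
                       + Rr i * (T i - CL i / thL i - (\<Sum>j\<in>{1..<k i}. w j)) \<and>
        (\<forall>j\<in>{k i..n}. thL i \<le> thH i j) \<and> thL i \<le> thF i) \<and>
    (\<forall>i\<in>tH.
        uH i * (\<Sum>j\<in>{1..<k i}. w j) \<le> (\<Sum>j\<in>{1..<k i}. thH i j * w j) \<and>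
        (\<forall>j\<in>{1..<k i}. th i j \<le> th i (j + 1)) \<and>
        (\<forall>j\<in>{k i..n}. uH i \<le> thH i j) \<and> uH i \<le> thF i) \<and>
    (\<forall>i\<in>tH. (\<forall>j\<in>{1..n}. thH i j \<le> 1) \<and> thF i \<le> 1) \<and>
    (\<forall>j\<in>{1..n}. 0 \<le> w j))"

definition soma_order :: "'a set \<Rightarrow> ('a \<Rightarrow> crit) \<Rightarrow> ('a \<Rightarrow> real) \<Rightarrow> ('a \<Rightarrow> real) \<Rightarrow> ('a \<Rightarrow> real)
    \<Rightarrow> ('a \<Rightarrow> nat) \<Rightarrow> bool" where
  "soma_order tau crit T CL CH k \<longleftrightarrow>
   (let tH = {i\<in>tau. crit i = HI}; key = (\<lambda>i. T i - CL i / (CH i / T i)) in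
    bij_betw k tH {1..card tH} \<and> (\<forall>i\<in>tH. \<forall>j\<in>tH. k i < k j \<longrightarrow> key i \<le> key j))"

definition soma_success_with :: "'a set \<Rightarrow> ('a \<Rightarrow> crit) \<Rightarrow> ('a \<Rightarrow> real) \<Rightarrow> ('a \<Rightarrow> real) \<Rightarrow> ('a \<Rightarrow> real)
    \<Rightarrow> nat \<Rightarrow> ('a \<Rightarrow> nat) \<Rightarrow> bool" where
  "soma_success_with tau crit T CL CH m k \<longleftrightarrow>
   (let tH = {i\<in>tau. crit i = HI} in
    \<exists>thL thH thF w. soma_feasible tau crit T CL CH m k thL thH thF w \<and>
      (\<forall>thL' thH' thF' w'. soma_feasible tau crit T CL CH m k thL' thH' thF' w' \<longrightarrow>
          (\<Sum>i\<in>tH. thL i) \<le> (\<Sum>i\<in>tH. thL' i)) \<and>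
      (\<Sum>i\<in>tau. thL i) \<le> real m)"

text \<open>SOMA declares success on m processors of speed s (execution times divided by s),
  whatever tie-breaking is used in step 2.\<close>

definition soma_success :: "'a set \<Rightarrow> ('a \<Rightarrow> crit) \<Rightarrow> ('a \<Rightarrow> real) \<Rightarrow> ('a \<Rightarrow> real) \<Rightarrow> ('a \<Rightarrow> real)
    \<Rightarrow> nat \<Rightarrow> real \<Rightarrow> bool" where
  "soma_success tau crit T CL CH m s \<longleftrightarrow>
   (let CLs = (\<lambda>i. CL i / s); CHs = (\<lambda>i. CH i / s) in
    \<forall>k. soma_order tau crit T CLs CHs k \<longrightarrow> soma_success_with tau crit T CLs CHs m k)"

end

theory Submission
  imports Defs
begin

text \<open>
  If the system is MC-schedulable on \<open>m\<close> unit-speed processors, release every task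
  periodically and count the work done in \<open>[0, H]\<close>: no more than \<open>m H\<close> units fit, while
  task \<open>i\<close> completes \<open>\<lfloor>H / T\<^sub>i\<rfloor>\<close> jobs.  Letting \<open>H\<close> grow, the scenario in which every job
  takes \<open>C\<^sup>L\<close> gives \<open>\<Sum> u\<^sup>L \<le> m\<close>, and the one in which HI-jobs take \<open>C\<^sup>H\<close> gives
  \<open>\<Sum>\<^sub>H u\<^sup>H \<le> m\<close>.

  At speed \<open>4/3\<close>, take all weights \<open>0\<close>, all HI-rates of task \<open>i\<close> equal to \<open>y = u\<^sup>H\<^sub>i\<close>, and
  the LO-rate \<open>3 x y / (y + 3 x)\<close> with \<open>x = u\<^sup>L\<^sub>i\<close>.  This satisfies (S1)--(S5), and by AM-HM
  the LO-rate is at most \<open>3 x / 4 + y / 4\<close>, so the LO-rates sum to at most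
  \<open>3 m / 4 + m / 4 = m\<close>.  Finally the optimisation problem of step 3 attains its minimum
  (it reduces to minimising over a compact set of rates of the last HI-task), and an optimal
  assignment does no worse than the one above.
\<close>

section \<open>Utilization bounds of MC-schedulable systems\<close>

lemma card_running_jobs_le:
  assumes "inj_on g I"
  shows "card {x\<in>I. t \<in> run_set sched m (g x)} \<le> m"
proof -
  let ?A = "{x\<in>I. t \<in> run_set sched m (g x)}"
  define p where "p x = (SOME p. p < m \<and> sched t p = Some (g x))" for x
  have p: "p x < m \<and> sched t (p x) = Some (g x)" if "x \<in> ?A" for x
    unfolding p_def by (rule someI_ex) (use that in \<open>auto simp: run_set_def\<close>)
  have "inj_on p ?A"
  proof (rule inj_onI)
    fix x y assume "x \<in> ?A" "y \<in> ?A" "p x = p y"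
    then have "g x = g y" using p[of x] p[of y] by auto
    then show "x = y" using assms \<open>x \<in> ?A\<close> \<open>y \<in> ?A\<close> by (auto dest: inj_onD)
  qed
  then have "card ?A \<le> card {..<m}" by (rule card_inj_on_le) (use p in auto)
  then show ?thesis by simp
qed

lemma fmeasurable_Icc_Int_run_set:
  assumes "run_set sched m j \<in> sets lebesgue"
  shows "{a..b} \<inter> run_set sched m j \<in> fmeasurable lebesgue"
  using fmeasurable_Int_fmeasurable[OF lmeasurable_interval(1) assms] .

lemma exec_mono:
  assumes "run_set sched m j \<in> sets lebesgue" "s \<le> t"
  shows "exec sched m j a s \<le> exec sched m j a t"
  unfolding exec_def
  by (rule measure_mono_fmeasurable[OF _ fmeasurableD[OF fmeasurable_Icc_Int_run_set]
        fmeasurable_Icc_Int_run_set]) (use assms in auto)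

lemma sum_exec_le:
  assumes "finite I" "inj_on g I" "\<forall>j. run_set sched m j \<in> sets lebesgue" "a \<le> b"
  shows "(\<Sum>x\<in>I. exec sched m (g x) a b) \<le> real m * (b - a)"
proof -
  define A where "A x = {a..b} \<inter> run_set sched m (g x)" for x
  have integrable: "integrable lebesgue (indicat_real S)" if "S \<in> fmeasurable lebesgue" for S
  proof -
    have "S \<inter> space lebesgue = S" by simp
    then show ?thesis using that by (simp only: integrable_indicator_iff fmeasurable_def mem_Collect_eq)
  qed
  have A: "integrable lebesgue (indicat_real (A x))" for x
    unfolding A_def by (intro integrable fmeasurable_Icc_Int_run_set) (use assms(3) in blast)
  have pointwise: "(\<Sum>x\<in>I. indicat_real (A x) t) \<le> real m * indicat_real {a..b} t" for t
  proof (cases "t \<in> {a..b}")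
    case True
    have "(\<Sum>x\<in>I. indicat_real (A x) t) = real (card {x\<in>I. t \<in> run_set sched m (g x)})"
      using True assms(1) by (simp add: A_def indicator_def sum.If_cases Int_def)
    also have "\<dots> \<le> real m" using card_running_jobs_le[OF assms(2)] by simp
    finally show ?thesis using True by simp
  next
    case False
    then have "indicat_real (A x) t = 0" for x by (auto simp: A_def)
    then show ?thesis using False by simp
  qed
  have "(\<Sum>x\<in>I. exec sched m (g x) a b) = integral\<^sup>L lebesgue (\<lambda>t. \<Sum>x\<in>I. indicat_real (A x) t)"
    using A by (simp add: exec_def A_def)
  also have "\<dots> \<le> integral\<^sup>L lebesgue (\<lambda>t. real m * indicat_real {a..b} t)"
    by (rule integral_mono[OF _ _ pointwise]) (use A integrable[OF lmeasurable_interval(1)] in auto)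
  also have "\<dots> = real m * (b - a)" using assms(4) by simp
  finally show ?thesis .
qed

lemma sum_periodic_demand_le:
  fixes C T :: "'a \<Rightarrow> real"
  assumes "finite I" "\<forall>i\<in>I. 0 < T i" "\<forall>i\<in>I. 0 \<le> C i"
    and "\<forall>j. run_set sched m j \<in> sets lebesgue"
    and "\<forall>i\<in>I. \<forall>q::nat. C i \<le> exec sched m (i, real q * T i) 0 (real q * T i + T i)"
    and "0 < H"
  shows "H * (\<Sum>i\<in>I. C i / T i) \<le> H * real m + (\<Sum>i\<in>I. C i)"
proof -
  define N where "N i = nat \<lfloor>H / T i\<rfloor>" for i
  define J where "J = Sigma I (\<lambda>i. {..<N i})"
  define g where "g = (\<lambda>(i, q::nat). (i, real q * T i))"
  have N: "H / T i - 1 \<le> real (N i)" "real (N i) * T i \<le> H" if "i \<in> I" for i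
  proof -
    have "0 < T i" using assms(2) that by blast
    then have "0 \<le> H / T i" using assms(6) by simp
    then show "H / T i - 1 \<le> real (N i)" unfolding N_def by (simp add: of_nat_int_floor)
    show "real (N i) * T i \<le> H"
      using of_nat_floor[OF \<open>0 \<le> H / T i\<close>] assms(2) that by (simp add: N_def pos_le_divide_eq)
  qed
  have inj: "inj_on g J" using assms(2) by (auto simp: inj_on_def J_def g_def)
  have "(\<Sum>i\<in>I. real (N i) * C i) = (\<Sum>(i, q)\<in>J. C i)"
    using assms(1) by (simp add: J_def sum.Sigma[symmetric])
  also have "\<dots> \<le> (\<Sum>x\<in>J. exec sched m (g x) 0 H)"
  proof (rule sum_mono, clarify)
    fix i q assume "(i, q) \<in> J"
    then have i: "i \<in> I" and q: "real q + 1 \<le> real (N i)" by (auto simp: J_def)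
    have "0 < T i" using assms(2) i by blast
    then have "real q * T i + T i \<le> H"
      using N(2)[OF i] mult_right_mono[OF q, of "T i"] by (simp add: algebra_simps)
    then show "C i \<le> exec sched m (g (i, q)) 0 H"
      using assms(5) i exec_mono[OF assms(4)[rule_format]] unfolding g_def
      by (fastforce intro: order_trans)
  qed
  also have "\<dots> \<le> real m * (H - 0)"
    by (rule sum_exec_le[OF _ inj assms(4)]) (use assms(1,6) in \<open>auto simp: J_def\<close>)
  finally have demand: "(\<Sum>i\<in>I. real (N i) * C i) \<le> H * real m" by (simp add: mult.commute)
  have "H * (\<Sum>i\<in>I. C i / T i) - (\<Sum>i\<in>I. C i) = (\<Sum>i\<in>I. (H / T i - 1) * C i)"
    by (simp add: sum_distrib_left sum_subtractf[symmetric] algebra_simps)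
  also have "\<dots> \<le> (\<Sum>i\<in>I. real (N i) * C i)"
    using N(1) assms(3) by (intro sum_mono mult_right_mono) auto
  finally show ?thesis using demand by linarith
qed

lemma le_of_forall_pos_mult_le:
  fixes U M K :: real
  assumes "\<And>H. 0 < H \<Longrightarrow> H * U \<le> H * M + K"
  shows "U \<le> M"
proof (rule ccontr)
  assume "\<not> U \<le> M"
  define H where "H = (\<bar>K\<bar> + 1) / (U - M)"
  have "0 < H" and "H * (U - M) = \<bar>K\<bar> + 1" using \<open>\<not> U \<le> M\<close> by (auto simp: H_def)
  then show False using assms[of H] by (simp add: algebra_simps)
qed

lemma utilization_le_processors:
  fixes C T :: "'a \<Rightarrow> real"
  assumes "finite I" "\<forall>i\<in>I. 0 < T i" "\<forall>i\<in>I. 0 \<le> C i"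
    and "\<forall>j. run_set sched m j \<in> sets lebesgue"
    and "\<forall>i\<in>I. \<forall>q::nat. C i \<le> exec sched m (i, real q * T i) 0 (real q * T i + T i)"
  shows "(\<Sum>i\<in>I. C i / T i) \<le> real m"
  using sum_periodic_demand_le[OF assms] by (rule le_of_forall_pos_mult_le)

lemma legal_periodic_arrivals:
  assumes "\<forall>i\<in>tau. 0 < T i"
  shows "legal_arrivals tau T (\<lambda>i. if i \<in> tau then range (\<lambda>q::nat. real q * T i) else {})"
  unfolding legal_arrivals_def
proof (intro conjI allI ballI impI)
  fix i r r' assume i: "i \<in> tau"
    and "r \<in> (if i \<in> tau then range (\<lambda>q::nat. real q * T i) else {})"
    and "r' \<in> (if i \<in> tau then range (\<lambda>q::nat. real q * T i) else {})" and "r \<noteq> r'"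
  then obtain q q' :: nat where r: "r = real q * T i" "r' = real q' * T i" "q \<noteq> q'" using i by auto
  then have "1 \<le> \<bar>real q - real q'\<bar>" by linarith
  moreover have "0 < T i" using assms i by blast
  moreover have "\<bar>r - r'\<bar> = \<bar>real q - real q'\<bar> * T i"
    using \<open>0 < T i\<close> by (simp add: r abs_mult left_diff_distrib[symmetric])
  ultimately show "T i \<le> \<bar>r - r'\<bar>" using mult_right_mono[of 1 _ "T i"] by simp
qed (use assms in auto)

lemma MC_schedulable_LO_utilization:
  assumes fin: "finite tau" and T: "\<forall>i\<in>tau. 0 < T i" and C: "\<forall>i\<in>tau. 0 < CL i \<and> CL i \<le> CH i"
    and mc: "MC_schedulable tau crit T CL CH m"
  shows "(\<Sum>i\<in>tau. CL i / T i) \<le> real m"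
proof -
  define R where "R i = (if i \<in> tau then range (\<lambda>q::nat. real q * T i) else {})" for i
  define c where "c = (\<lambda>(i::'a, r::real). CL i)"
  have "legal_scenario crit CL CH R c" using C by (auto simp: legal_scenario_def c_def R_def)
  then obtain sched where sched: "valid_schedule m R c sched" "mc_correct crit T CL R c sched m"
    using mc legal_periodic_arrivals[OF T] unfolding MC_schedulable_def R_def by blast
  have never_switched: "\<not> switched crit CL R c sched m t" for t
    by (simp add: switched_def c_def)
  show ?thesis
  proof (rule utilization_le_processors[OF fin T])
    show "\<forall>j. run_set sched m j \<in> sets lebesgue" using sched(1) by (simp add: valid_schedule_def)
    show "\<forall>i\<in>tau. \<forall>q::nat. CL i \<le> exec sched m (i, real q * T i) 0 (real q * T i + T i)"
    proof (intro ballI allI)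
      fix i q assume "i \<in> tau"
      then have "real q * T i \<in> R i" by (auto simp: R_def)
      then show "CL i \<le> exec sched m (i, real q * T i) 0 (real q * T i + T i)"
        using sched(2) never_switched unfolding mc_correct_def by (simp add: c_def)
    qed
  qed (use C in auto)
qed

lemma MC_schedulable_HI_utilization:
  assumes fin: "finite tau" and T: "\<forall>i\<in>tau. 0 < T i" and C: "\<forall>i\<in>tau. 0 < CL i \<and> CL i \<le> CH i"
    and mc: "MC_schedulable tau crit T CL CH m"
  shows "(\<Sum>i\<in>{i\<in>tau. crit i = HI}. CH i / T i) \<le> real m"
proof -
  define R where "R i = (if i \<in> tau then range (\<lambda>q::nat. real q * T i) else {})" for i
  define c where "c = (\<lambda>(i::'a, r::real). if crit i = HI then CH i else CL i)"
  have "legal_scenario crit CL CH R c" using C by (auto simp: legal_scenario_def c_def R_def)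
  then obtain sched where sched: "valid_schedule m R c sched" "mc_correct crit T CL R c sched m"
    using mc legal_periodic_arrivals[OF T] unfolding MC_schedulable_def R_def by blast
  show ?thesis
  proof (rule utilization_le_processors)
    show "\<forall>j. run_set sched m j \<in> sets lebesgue" using sched(1) by (simp add: valid_schedule_def)
    show "\<forall>i\<in>{i\<in>tau. crit i = HI}. \<forall>q::nat. CH i \<le> exec sched m (i, real q * T i) 0 (real q * T i + T i)"
    proof (intro ballI allI)
      fix i q assume "i \<in> {i\<in>tau. crit i = HI}"
      moreover from this have "real q * T i \<in> R i" by (auto simp: R_def)
      ultimately show "CH i \<le> exec sched m (i, real q * T i) 0 (real q * T i + T i)"
        using sched(2) unfolding mc_correct_def by (simp add: c_def)
    qed
  qed (use fin T C in auto)
qed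

section \<open>A feasible assignment at speed 4/3\<close>

lemma soma_feasible_iff:
  assumes "tH = {i\<in>tau. crit i = HI}" "n = card tH"
  shows "soma_feasible tau crit T CL CH m k thL thH thF w \<longleftrightarrow>
    (\<forall>i\<in>tau. crit i = LO \<longrightarrow> thL i = CL i / T i) \<and>
    (\<forall>i\<in>tau. CL i / T i \<le> thL i) \<and>
    (\<forall>j\<in>{1..n}. (\<Sum>i\<in>tH. thH i j) \<le> real m) \<and> (\<Sum>i\<in>tH. thF i) \<le> real m \<and>
    (\<forall>i\<in>tH.
        CH i - CL i \<le> (\<Sum>j\<in>{1..<k i}. thH i j * w j)
          + (if k i \<le> n then thH i (k i) else thF i) * (T i - CL i / thL i - (\<Sum>j\<in>{1..<k i}. w j)) \<and>
        (\<forall>j\<in>{k i..n}. thL i \<le> thH i j) \<and> thL i \<le> thF i) \<and>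
    (\<forall>i\<in>tH.
        CH i / T i * (\<Sum>j\<in>{1..<k i}. w j) \<le> (\<Sum>j\<in>{1..<k i}. thH i j * w j) \<and>
        (\<forall>j\<in>{1..<k i}. (if j \<le> n then thH i j else thF i) \<le> (if j + 1 \<le> n then thH i (j + 1) else thF i)) \<and>
        (\<forall>j\<in>{k i..n}. CH i / T i \<le> thH i j) \<and> CH i / T i \<le> thF i) \<and>
    (\<forall>i\<in>tH. (\<forall>j\<in>{1..n}. thH i j \<le> 1) \<and> thF i \<le> 1) \<and>
    (\<forall>j\<in>{1..n}. 0 \<le> w j)"
  unfolding soma_feasible_def Let_def assms by (rule refl)

lemma soma_feasible_zero_weightsI:
  assumes tH: "tH = {i\<in>tau. crit i = HI}" and n: "n = card tH" and k: "\<forall>i\<in>tH. k i \<le> n"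
    and "\<forall>i\<in>tau. crit i = LO \<longrightarrow> thL i = CL i / T i"
    and "\<forall>i\<in>tau. CL i / T i \<le> thL i"
    and "\<forall>j\<in>{1..n}. (\<Sum>i\<in>tH. thH i j) \<le> real m" and "(\<Sum>i\<in>tH. thF i) \<le> real m"
    and "\<forall>i\<in>tH. CH i - CL i \<le> thH i (k i) * (T i - CL i / thL i)"
    and "\<forall>i\<in>tH. \<forall>j\<in>{1..<k i}. thH i j \<le> thH i (j + 1)"
    and "\<forall>i\<in>tH. \<forall>j\<in>{k i..n}. max (thL i) (CH i / T i) \<le> thH i j"
    and "\<forall>i\<in>tH. max (thL i) (CH i / T i) \<le> thF i \<and> thF i \<le> 1"
    and "\<forall>i\<in>tH. \<forall>j\<in>{1..n}. thH i j \<le> 1"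
  shows "soma_feasible tau crit T CL CH m k thL thH thF (\<lambda>_. 0)"
  unfolding soma_feasible_iff[OF tH n] using assms(3-) by fastforce

text \<open>The LO-rate \<open>3 x y / (y + 3 x)\<close>, i.e. \<open>1/\<theta> = 1/(3 x) + 1/y\<close>, is the one for which
  (S4) holds with equality at speed \<open>4/3\<close> when the HI-rate is \<open>y\<close> and all weights vanish.\<close>

lemma speedup_lo_rate_bounds:
  fixes x y :: real
  assumes "0 < x" "x \<le> y"
  shows "x / (4/3) \<le> 3 * x * y / (y + 3 * x)"
    and "3 * x * y / (y + 3 * x) \<le> y"
    and "3 * x * y / (y + 3 * x) \<le> 3/4 * x + y / 4"
proof -
  show "x / (4/3) \<le> 3 * x * y / (y + 3 * x)" "3 * x * y / (y + 3 * x) \<le> y"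
    using assms by (simp_all add: field_simps)
  have "0 \<le> (3 * x - y)\<^sup>2" by simp
  then show "3 * x * y / (y + 3 * x) \<le> 3/4 * x + y / 4"
    using assms by (simp add: field_simps power2_eq_square)
qed

lemma speedup_lo_rate_budget:
  fixes T CL CH :: real
  assumes "0 < T" "0 < CL" "CL \<le> CH"
  shows "CH / (4/3) - CL / (4/3)
           = CH / T * (T - CL / (4/3) / (3 * (CL / T) * (CH / T) / (CH / T + 3 * (CL / T))))"
  using assms by (simp add: field_simps)

lemma soma_feasible_speedup:
  assumes fin: "finite tau" and T: "\<forall>i\<in>tau. 0 < T i"
    and C: "\<forall>i\<in>tau. 0 < CL i \<and> CL i \<le> CH i" and U: "\<forall>i\<in>tau. CH i / T i \<le> 1"
    and k: "\<forall>i\<in>{i\<in>tau. crit i = HI}. k i \<le> card {i\<in>tau. crit i = HI}"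
    and U_LO: "(\<Sum>i\<in>tau. CL i / T i) \<le> real m"
    and U_HI: "(\<Sum>i\<in>{i\<in>tau. crit i = HI}. CH i / T i) \<le> real m"
  shows "\<exists>thL thH thF w. soma_feasible tau crit T (\<lambda>i. CL i / (4/3)) (\<lambda>i. CH i / (4/3)) m k thL thH thF w
           \<and> (\<Sum>i\<in>tau. thL i) \<le> real m"
proof -
  define tH where "tH = {i\<in>tau. crit i = HI}"
  define x where "x i = CL i / T i" for i
  define y where "y i = CH i / T i" for i
  define thL where "thL i = (if crit i = HI then 3 * x i * y i / (y i + 3 * x i) else x i / (4/3))" for i
  have xy: "0 < x i" "x i \<le> y i" if "i \<in> tau" for i
    using C T that unfolding x_def y_def by (auto simp: divide_right_mono)
  have rate: "x i / (4/3) \<le> 3 * x i * y i / (y i + 3 * x i)"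
    "3 * x i * y i / (y i + 3 * x i) \<le> y i"
    "3 * x i * y i / (y i + 3 * x i) \<le> 3/4 * x i + y i / 4" if "i \<in> tau" for i
    using speedup_lo_rate_bounds[OF xy[OF that]] by auto
  have uH: "CH i / (4/3) / T i \<le> y i" if "i \<in> tau" for i
    using xy[OF that] by (simp add: y_def)
  have "soma_feasible tau crit T (\<lambda>i. CL i / (4/3)) (\<lambda>i. CH i / (4/3)) m k thL (\<lambda>i j. y i) y (\<lambda>_. 0)"
  proof (rule soma_feasible_zero_weightsI[OF tH_def refl])
    show "\<forall>i\<in>tH. CH i / (4/3) - CL i / (4/3) \<le> y i * (T i - CL i / (4/3) / thL i)"
    proof
      fix i assume "i \<in> tH"
      then have "i \<in> tau" "crit i = HI" by (auto simp: tH_def)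
      then show "CH i / (4/3) - CL i / (4/3) \<le> y i * (T i - CL i / (4/3) / thL i)"
        using speedup_lo_rate_budget[of "T i" "CL i" "CH i"] T C by (simp add: thL_def x_def y_def)
    qed
    show "\<forall>i\<in>tau. CL i / (4/3) / T i \<le> thL i"
    proof
      fix i assume "i \<in> tau"
      have "CL i / (4/3) / T i = x i / (4/3)" by (simp add: x_def)
      also have "\<dots> \<le> thL i" unfolding thL_def using rate(1)[OF \<open>i \<in> tau\<close>] by auto
      finally show "CL i / (4/3) / T i \<le> thL i" .
    qed
    show "\<forall>i\<in>tH. \<forall>j\<in>{k i..card tH}. max (thL i) (CH i / (4/3) / T i) \<le> y i"
      and "\<forall>i\<in>tH. max (thL i) (CH i / (4/3) / T i) \<le> y i \<and> y i \<le> 1"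
      using rate(2) uH U by (auto simp: tH_def thL_def y_def[symmetric])
  qed (use k U U_HI in \<open>auto simp: tH_def thL_def x_def y_def\<close>)
  moreover have "(\<Sum>i\<in>tau. thL i) \<le> real m"
  proof -
    have "(\<Sum>i\<in>tau. thL i) \<le> (\<Sum>i\<in>tau. 3/4 * x i + (if crit i = HI then y i / 4 else 0))"
      using rate(3) by (intro sum_mono) (auto simp: thL_def)
    also have "\<dots> = 3/4 * (\<Sum>i\<in>tau. x i) + 1/4 * (\<Sum>i\<in>tH. y i)"
      using fin by (simp add: sum.distrib sum_distrib_left sum.If_cases tH_def sum_divide_distrib Int_def)
    also have "\<dots> \<le> 3/4 * real m + 1/4 * real m"
      using U_LO U_HI by (intro add_mono) (auto simp: x_def y_def tH_def)
    finally show ?thesis by simp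
  qed
  ultimately show ?thesis by blast
qed

section \<open>Existence of an optimal assignment\<close>

lemma soma_feasible_single_rate:
  assumes feas: "soma_feasible tau crit T CL CH m k thL thH thF w"
    and tH: "tH = {i\<in>tau. crit i = HI}" and n: "n = card tH"
    and i: "i \<in> tH" and k: "1 \<le> k i" "k i \<le> n"
  shows "CH i - CL i \<le> thH i (k i) * (T i - CL i / thL i)"
proof -
  note F = feas[unfolded soma_feasible_iff[OF tH n]]
  have "CH i - CL i \<le> (\<Sum>j\<in>{1..<k i}. thH i j * w j)
          + (if k i \<le> n then thH i (k i) else thF i) * (T i - CL i / thL i - (\<Sum>j\<in>{1..<k i}. w j))"
    using F i by blast
  then have budget: "CH i - CL i \<le> (\<Sum>j\<in>{1..<k i}. thH i j * w j)
                       + thH i (k i) * (T i - CL i / thL i - (\<Sum>j\<in>{1..<k i}. w j))"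
    using k by simp
  have chain: "\<forall>j\<in>{1..<k i}. (if j \<le> n then thH i j else thF i) \<le> (if j + 1 \<le> n then thH i (j + 1) else thF i)"
    using F i by blast
  have "thH i j \<le> thH i (k i)" if "j \<in> {1..<k i}" for j
  proof (rule lift_Suc_mono_le_ivl[where N = "{1..<k i}"])
    show "thH i j' \<le> thH i (Suc j')" if "j' \<in> {1..<k i}" for j'
      using chain that k by auto
  qed (use that in auto)
  moreover have "\<forall>j\<in>{1..n}. 0 \<le> w j" using F by blast
  ultimately have "(\<Sum>j\<in>{1..<k i}. thH i j * w j) \<le> (\<Sum>j\<in>{1..<k i}. thH i (k i) * w j)"
    using k by (intro sum_mono mult_right_mono) auto
  then show ?thesis using budget by (simp add: sum_distrib_left algebra_simps)
qed

text \<open>A HI-job served at LO-rate \<open>\<theta>\<close> may overrun only at time \<open>CL/\<theta>\<close>, after which at most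
  \<open>T - CL/\<theta>\<close> time units at rate at most 1 remain for its extra demand \<open>CH - CL\<close>;
  \<open>min_lo_rate\<close> is the least \<open>\<theta>\<close> for which this suffices.\<close>

definition min_lo_rate :: "real \<Rightarrow> real \<Rightarrow> real \<Rightarrow> real" where
  "min_lo_rate T CL CH = CL / (T - (CH - CL))"

lemma min_lo_rate_bounds:
  assumes "0 < CL" "CL \<le> CH" "CH \<le> T"
  shows "CL / T \<le> min_lo_rate T CL CH" "min_lo_rate T CL CH \<le> 1"
    and "T - CL / min_lo_rate T CL CH = CH - CL"
  using assms by (auto simp: min_lo_rate_def intro: divide_left_mono)

lemma soma_feasible_min_lo_rate_le:
  assumes feas: "soma_feasible tau crit T CL CH m k thL thH thF w"
    and tH: "tH = {i\<in>tau. crit i = HI}" and n: "n = card tH"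
    and i: "i \<in> tH" and k: "1 \<le> k i" "k i \<le> n"
    and C: "0 < T i" "0 < CL i" "CL i \<le> CH i" "CH i \<le> T i"
  shows "min_lo_rate (T i) (CL i) (CH i) \<le> thL i"
proof -
  note F = feas[unfolded soma_feasible_iff[OF tH n]]
  let ?R = "thH i (k i)"
  have budget: "CH i - CL i \<le> ?R * (T i - CL i / thL i)"
    by (rule soma_feasible_single_rate[OF feas tH n i k])
  have "k i \<in> {k i..n}" "k i \<in> {1..n}" "i \<in> tau" using k i tH by auto
  then have "CL i / T i \<le> thL i" "CH i / T i \<le> ?R" "?R \<le> 1" using F i by blast+
  moreover have "0 < CL i / T i" "0 < CH i / T i" using C by auto
  ultimately have pos: "0 < thL i" "0 < ?R" by linarith+
  have "0 \<le> T i - CL i / thL i"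
  proof (rule ccontr)
    assume "\<not> 0 \<le> T i - CL i / thL i"
    then have "?R * (T i - CL i / thL i) < 0" using pos(2) by (simp add: mult_pos_neg)
    then show False using budget C by linarith
  qed
  then have "?R * (T i - CL i / thL i) \<le> T i - CL i / thL i"
    using \<open>?R \<le> 1\<close> pos(2) by (intro mult_left_le_one_le) auto
  then have "CL i / thL i \<le> T i - (CH i - CL i)" using budget by linarith
  then have "CL i \<le> (T i - (CH i - CL i)) * thL i" using pos(1) by (simp add: divide_le_eq)
  moreover have "0 < T i - (CH i - CL i)" using C by linarith
  ultimately show ?thesis by (simp add: min_lo_rate_def divide_le_eq mult.commute)
qed

lemma soma_feasible_sum_lo_rates:
  assumes feas: "soma_feasible tau crit T CL CH m k thL thH thF w" and fin: "finite tau"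
  shows "(\<Sum>i\<in>tau. thL i)
           = (\<Sum>i\<in>{i\<in>tau. crit i = LO}. CL i / T i) + (\<Sum>i\<in>{i\<in>tau. crit i = HI}. thL i)"
proof -
  have LO: "\<forall>i\<in>tau. crit i = LO \<longrightarrow> thL i = CL i / T i"
    using feas unfolding soma_feasible_iff[OF refl refl] by blast
  have "tau = {i\<in>tau. crit i = LO} \<union> {i\<in>tau. crit i = HI}" using crit.exhaust by blast
  then have "(\<Sum>i\<in>tau. thL i) = (\<Sum>i\<in>{i\<in>tau. crit i = LO} \<union> {i\<in>tau. crit i = HI}. thL i)"
    by (rule arg_cong)
  also have "\<dots> = (\<Sum>i\<in>{i\<in>tau. crit i = LO}. thL i) + (\<Sum>i\<in>{i\<in>tau. crit i = HI}. thL i)"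
    by (rule sum.union_disjoint) (use fin in auto)
  also have "(\<Sum>i\<in>{i\<in>tau. crit i = LO}. thL i) = (\<Sum>i\<in>{i\<in>tau. crit i = LO}. CL i / T i)"
    using LO by simp
  finally show ?thesis .
qed

text \<open>(S4) of the task indexed last, multiplied by its LO-rate \<open>x\<close> so that the region is closed;
  \<open>B\<close> is the capacity the other HI-tasks leave in the last column of (S3).\<close>

definition last_task_rates :: "real \<Rightarrow> real \<Rightarrow> real \<Rightarrow> real \<Rightarrow> (real \<times> real) set" where
  "last_task_rates T CL CH B =
     {(x, R). CL / T \<le> x \<and> x \<le> R \<and> CH / T \<le> R \<and> R \<le> 1 \<and> R \<le> B \<and> (CH - CL) * x \<le> R * (T * x - CL)}"

lemma compact_last_task_rates: "compact (last_task_rates T CL CH B)"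
proof -
  have eq: "last_task_rates T CL CH B = {p. CL / T \<le> fst p \<and> fst p \<le> snd p \<and> CH / T \<le> snd p \<and>
      snd p \<le> 1 \<and> snd p \<le> B \<and> (CH - CL) * fst p \<le> snd p * (T * fst p - CL)}"
    by (auto simp: last_task_rates_def)
  have "closed (last_task_rates T CL CH B)"
    unfolding eq by (intro closed_Collect_conj closed_Collect_le continuous_intros)
  moreover have "bounded (last_task_rates T CL CH B)"
  proof (rule bounded_subset)
    show "bounded ({CL / T..1} \<times> {CL / T..1})" by (intro bounded_Times) simp_all
  qed (auto simp: last_task_rates_def)
  ultimately show ?thesis by (simp add: compact_eq_bounded_closed)
qed

lemma soma_feasible_last_task_rates:
  assumes feas: "soma_feasible tau crit T CL CH m k thL thH thF w"
    and tH: "tH = {i\<in>tau. crit i = HI}" and n: "n = card tH"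
    and k: "bij_betw k tH {1..n}" and l: "l \<in> tH" "k l = n"
    and C: "\<forall>i\<in>tH. 0 < T i \<and> 0 < CL i \<and> CL i \<le> CH i \<and> CH i \<le> T i"
  shows "(thL l, thH l n) \<in> last_task_rates (T l) (CL l) (CH l)
           (real m - (\<Sum>i\<in>tH - {l}. max (CH i / T i) (min_lo_rate (T i) (CL i) (CH i))))"
proof -
  note F = feas[unfolded soma_feasible_iff[OF tH n]]
  have k_range: "1 \<le> k i" "k i \<le> n" if "i \<in> tH" for i
    using k that by (auto simp: bij_betw_def)
  have last_col: "n \<in> {k i..n}" "n \<in> {1..n}" if "i \<in> tH" for i
    using k_range[OF that] by auto
  have "l \<in> tau" using l tH by blast
  then have rates: "CL l / T l \<le> thL l" "thL l \<le> thH l n" "CH l / T l \<le> thH l n" "thH l n \<le> 1"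
    using F l last_col[OF l(1)] by blast+
  have "0 < CL l / T l" using C l by simp
  then have "0 < thL l" using rates(1) by linarith
  moreover have "CH l - CL l \<le> thH l n * (T l - CL l / thL l)"
    using soma_feasible_single_rate[OF feas tH n l(1) k_range[OF l(1)]] l(2) by simp
  ultimately have budget: "(CH l - CL l) * thL l \<le> thH l n * (T l * thL l - CL l)"
    by (simp add: field_simps)
  have "(\<Sum>i\<in>tH - {l}. max (CH i / T i) (min_lo_rate (T i) (CL i) (CH i))) \<le> (\<Sum>i\<in>tH - {l}. thH i n)"
  proof (rule sum_mono)
    fix i assume "i \<in> tH - {l}"
    then have i: "i \<in> tH" by blast
    have "min_lo_rate (T i) (CL i) (CH i) \<le> thL i"
      using soma_feasible_min_lo_rate_le[OF feas tH n i k_range[OF i]] C i by blast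
    moreover have "thL i \<le> thH i n" "CH i / T i \<le> thH i n" using F i last_col[OF i] by blast+
    ultimately show "max (CH i / T i) (min_lo_rate (T i) (CL i) (CH i)) \<le> thH i n" by simp
  qed
  moreover have "(\<Sum>i\<in>tH. thH i n) = thH l n + (\<Sum>i\<in>tH - {l}. thH i n)"
    using l(1) bij_betw_finite[OF k] by (intro sum.remove) auto
  moreover have "(\<Sum>i\<in>tH. thH i n) \<le> real m" using F last_col[OF l(1)] by blast
  ultimately show ?thesis using rates budget by (auto simp: last_task_rates_def)
qed

text \<open>The assignment problem does not bound the rates \<open>thH i j\<close> with \<open>j < k i\<close> from below, and
  with all weights \<open>0\<close> they only have to increase up to \<open>thH i (k i)\<close>.  Setting them to
  \<open>-n\<close> makes every column \<open>j < n\<close> of (S3) hold, as the last task contributes \<open>-n\<close> there; so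
  every other task can use rate \<open>1\<close> from column \<open>k i\<close> on and run at its \<open>min_lo_rate\<close>.\<close>

lemma soma_feasible_of_last_task_rates:
  assumes tH: "tH = {i\<in>tau. crit i = HI}" and n: "n = card tH"
    and k: "bij_betw k tH {1..n}" and l: "l \<in> tH" "k l = n"
    and C: "\<forall>i\<in>tH. 0 < T i \<and> 0 < CL i \<and> CL i \<le> CH i \<and> CH i \<le> T i"
  defines "M \<equiv> \<lambda>i. max (CH i / T i) (min_lo_rate (T i) (CL i) (CH i))"
  assumes xR: "(x, R) \<in> last_task_rates (T l) (CL l) (CH l) (real m - (\<Sum>i\<in>tH - {l}. M i))"
  defines "thL \<equiv> \<lambda>i. if i = l then x else if i \<in> tH then min_lo_rate (T i) (CL i) (CH i) else CL i / T i"
    and "thH \<equiv> \<lambda>i j. if j < k i then - real n else if j = n then if i = l then R else M i else 1"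
    and "thF \<equiv> \<lambda>i. if i = l then R else M i"
  shows "soma_feasible tau crit T CL CH m k thL thH thF (\<lambda>_. 0)"
proof -
  have finH: "finite tH" using bij_betw_finite[OF k] by simp
  have k_range: "1 \<le> k i" "k i \<le> n" if "i \<in> tH" for i
    using k that by (auto simp: bij_betw_def)
  have k_less: "k i < n" if "i \<in> tH" "i \<noteq> l" for i
    using k_range[OF that(1)] l k that by (metis bij_betw_iff_bijections le_neq_implies_less)
  have a: "CL i / T i \<le> min_lo_rate (T i) (CL i) (CH i)" "min_lo_rate (T i) (CL i) (CH i) \<le> 1"
    "T i - CL i / min_lo_rate (T i) (CL i) (CH i) = CH i - CL i" if "i \<in> tH" for i
    using min_lo_rate_bounds C that by auto
  have M: "0 \<le> M i" "M i \<le> 1" "CH i / T i \<le> M i" "min_lo_rate (T i) (CL i) (CH i) \<le> M i"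
    if "i \<in> tH" for i
  proof -
    have "0 < CL i / T i" "CH i / T i \<le> 1" using C that by auto
    then show "0 \<le> M i" "M i \<le> 1" "CH i / T i \<le> M i" "min_lo_rate (T i) (CL i) (CH i) \<le> M i"
      using a[OF that] by (auto simp: M_def)
  qed
  have x: "CL l / T l \<le> x" "x \<le> R" "CH l / T l \<le> R" "R \<le> 1"
    and R_budget: "R + (\<Sum>i\<in>tH - {l}. M i) \<le> real m"
    and x_budget: "(CH l - CL l) * x \<le> R * (T l * x - CL l)"
    using xR by (auto simp: last_task_rates_def)
  have "0 < CL l / T l" using C l by simp
  then have "0 < x" using x(1) by linarith
  have sum_M: "(\<Sum>i\<in>tH. if i = l then R else M i) = R + (\<Sum>i\<in>tH - {l}. M i)"
    using finH l(1) by (simp add: sum.remove)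
  have columns: "(\<Sum>i\<in>tH. thH i j) \<le> real m" if "j \<in> {1..n}" for j
  proof (cases "j = n")
    case True
    have "(\<Sum>i\<in>tH. thH i n) = (\<Sum>i\<in>tH. if i = l then R else M i)"
    proof (rule sum.cong)
      fix i assume "i \<in> tH"
      then have "\<not> n < k i" using k_range(2) by (simp add: not_less)
      then show "thH i n = (if i = l then R else M i)" by (simp add: thH_def)
    qed simp
    then show ?thesis using True sum_M R_budget by simp
  next
    case False
    then have "j < k l" using that l(2) by simp
    have "(\<Sum>i\<in>tH - {l}. thH i j) \<le> real (card (tH - {l})) * 1"
      using M by (intro sum_bounded_above) (auto simp: thH_def)
    moreover have "(\<Sum>i\<in>tH. thH i j) = thH l j + (\<Sum>i\<in>tH - {l}. thH i j)"
      using finH l(1) by (rule sum.remove)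
    moreover have "real (card (tH - {l})) = real n - 1"
    proof -
      have "1 \<le> n" using k_range[OF l(1)] l(2) by simp
      then show ?thesis using finH l(1) n by (simp add: of_nat_diff)
    qed
    ultimately show ?thesis using \<open>j < k l\<close> by (simp add: thH_def)
  qed
  have budget: "CH i - CL i \<le> thH i (k i) * (T i - CL i / thL i)" if "i \<in> tH" for i
  proof (cases "i = l")
    case True
    have "(CH l - CL l) * x \<le> R * (T l - CL l / x) * x"
      using x_budget \<open>0 < x\<close> by (simp add: algebra_simps)
    then show ?thesis using True \<open>0 < x\<close> l(2) by (simp add: thH_def thL_def)
  next
    case False
    then show ?thesis using that a[OF that] k_less[OF that] by (simp add: thH_def thL_def)
  qed
  show ?thesis
  proof (rule soma_feasible_zero_weightsI[OF tH n])
    show "\<forall>j\<in>{1..n}. (\<Sum>i\<in>tH. thH i j) \<le> real m" using columns by blast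
    show "\<forall>i\<in>tH. CH i - CL i \<le> thH i (k i) * (T i - CL i / thL i)" using budget by blast
    have "- real n \<le> thH i j" if "i \<in> tH" for i j
      using M[OF that] x \<open>0 < x\<close> by (simp add: thH_def)
    moreover have "thH i j = - real n" if "j < k i" for i j
      using that by (simp add: thH_def)
    ultimately show "\<forall>i\<in>tH. \<forall>j\<in>{1..<k i}. thH i j \<le> thH i (j + 1)" by simp
    show "\<forall>i\<in>tau. CL i / T i \<le> thL i"
      using a(1) x(1) by (auto simp: thL_def tH)
    have "CH i / T i \<le> 1" if "i \<in> tH" for i using C that by simp
    then show "\<forall>i\<in>tH. \<forall>j\<in>{k i..n}. max (thL i) (CH i / T i) \<le> thH i j"
      using k_range k_less M a(2) x l by (auto simp: thL_def thH_def)
  qed (use k_range M x sum_M R_budget l tH in \<open>auto simp: thL_def thH_def thF_def\<close>)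
qed

lemma soma_optimum_exists:
  assumes C: "\<forall>i\<in>{i\<in>tau. crit i = HI}. 0 < T i \<and> 0 < CL i \<and> CL i \<le> CH i \<and> CH i \<le> T i"
    and k: "bij_betw k {i\<in>tau. crit i = HI} {1..card {i\<in>tau. crit i = HI}}"
    and feas0: "soma_feasible tau crit T CL CH m k thL0 thH0 thF0 w0"
  shows "\<exists>thL thH thF w. soma_feasible tau crit T CL CH m k thL thH thF w \<and>
      (\<forall>thL' thH' thF' w'. soma_feasible tau crit T CL CH m k thL' thH' thF' w' \<longrightarrow>
          (\<Sum>i\<in>{i\<in>tau. crit i = HI}. thL i) \<le> (\<Sum>i\<in>{i\<in>tau. crit i = HI}. thL' i))"
proof (cases "{i\<in>tau. crit i = HI} = {}")
  case True
  show ?thesis unfolding True using feas0 by auto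
next
  case False
  define tH where "tH = {i\<in>tau. crit i = HI}"
  define n where "n = card tH"
  have finH: "finite tH" using bij_betw_finite[OF k] by (simp add: tH_def)
  then have "n \<in> {1..n}" using False by (auto simp: n_def tH_def card_gt_0_iff Suc_le_eq)
  then obtain l where l: "l \<in> tH" "k l = n"
    using k by (metis bij_betw_iff_bijections n_def tH_def)
  define a where "a i = min_lo_rate (T i) (CL i) (CH i)" for i
  define Q where "Q = last_task_rates (T l) (CL l) (CH l)
                        (real m - (\<Sum>i\<in>tH - {l}. max (CH i / T i) (a i)))"
  have k': "bij_betw k tH {1..n}" using k by (simp add: tH_def n_def)
  have C': "\<forall>i\<in>tH. 0 < T i \<and> 0 < CL i \<and> CL i \<le> CH i \<and> CH i \<le> T i" using C by (simp add: tH_def)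
  have feas_Q: "(thL' l, thH' l n) \<in> Q"
    if "soma_feasible tau crit T CL CH m k thL' thH' thF' w'" for thL' thH' thF' w'
    using soma_feasible_last_task_rates[OF that tH_def n_def k' l C'] by (simp add: Q_def a_def)
  have "compact (fst ` Q)"
    unfolding Q_def by (intro compact_continuous_image continuous_intros compact_last_task_rates)
  moreover have "fst ` Q \<noteq> {}" using feas_Q[OF feas0] by force
  ultimately obtain x where "x \<in> fst ` Q" and x_min: "\<forall>x'\<in>fst ` Q. x \<le> x'"
    using compact_attains_inf by blast
  then obtain R where xR: "(x, R) \<in> Q" by auto
  define thL where "thL i = (if i = l then x else if i \<in> tH then a i else CL i / T i)" for i
  have "soma_feasible tau crit T CL CH m k thL
      (\<lambda>i j. if j < k i then - real n else if j = n then if i = l then R else max (CH i / T i) (a i) else 1)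
      (\<lambda>i. if i = l then R else max (CH i / T i) (a i)) (\<lambda>_. 0)"
    using soma_feasible_of_last_task_rates[OF tH_def n_def k' l C'] xR
    unfolding thL_def Q_def a_def by simp
  moreover have "(\<Sum>i\<in>tH. thL i) \<le> (\<Sum>i\<in>tH. thL' i)"
    if feas': "soma_feasible tau crit T CL CH m k thL' thH' thF' w'" for thL' thH' thF' w'
  proof -
    have "x \<le> thL' l" using feas_Q[OF feas'] x_min by force
    moreover have "a i \<le> thL' i" if "i \<in> tH" for i
    proof -
      have "k i \<in> {1..n}" using bij_betwE[OF k'] that by blast
      then show ?thesis
        unfolding a_def using soma_feasible_min_lo_rate_le[OF feas' tH_def n_def that] C' that by auto
    qed
    ultimately have "thL l + (\<Sum>i\<in>tH - {l}. thL i) \<le> thL' l + (\<Sum>i\<in>tH - {l}. thL' i)"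
      by (intro add_mono sum_mono) (auto simp: thL_def)
    then show ?thesis using finH l(1) by (simp add: sum.remove)
  qed
  ultimately show ?thesis unfolding tH_def by blast
qed

lemma soma_success_withI:
  assumes fin: "finite tau"
    and C: "\<forall>i\<in>{i\<in>tau. crit i = HI}. 0 < T i \<and> 0 < CL i \<and> CL i \<le> CH i \<and> CH i \<le> T i"
    and k: "bij_betw k {i\<in>tau. crit i = HI} {1..card {i\<in>tau. crit i = HI}}"
    and feas0: "soma_feasible tau crit T CL CH m k thL0 thH0 thF0 w0"
    and sum0: "(\<Sum>i\<in>tau. thL0 i) \<le> real m"
  shows "soma_success_with tau crit T CL CH m k"
proof -
  obtain thL thH thF w
    where feas: "soma_feasible tau crit T CL CH m k thL thH thF w"
      and opt: "\<forall>thL' thH' thF' w'. soma_feasible tau crit T CL CH m k thL' thH' thF' w' \<longrightarrow>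
          (\<Sum>i\<in>{i\<in>tau. crit i = HI}. thL i) \<le> (\<Sum>i\<in>{i\<in>tau. crit i = HI}. thL' i)"
    using soma_optimum_exists[OF C k feas0] by blast
  have "(\<Sum>i\<in>tau. thL i) \<le> (\<Sum>i\<in>tau. thL0 i)"
    using opt feas0
    unfolding soma_feasible_sum_lo_rates[OF feas fin] soma_feasible_sum_lo_rates[OF feas0 fin]
    by auto
  then have "(\<Sum>i\<in>tau. thL i) \<le> real m" using sum0 by linarith
  then show ?thesis unfolding soma_success_with_def Let_def using feas opt by blast
qed

theorem lemma5:
  fixes tau :: "'a set" and crit :: "'a \<Rightarrow> crit" and T CL CH :: "'a \<Rightarrow> real" and m :: nat
  assumes "finite tau"
    and "\<forall>i\<in>tau. 0 < T i"
    and "\<forall>i\<in>tau. 0 < CL i \<and> CL i \<le> CH i"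
    and "\<forall>i\<in>tau. crit i = LO \<longrightarrow> CH i = CL i"
    and "\<forall>i\<in>tau. CL i / T i \<le> 1 \<and> CH i / T i \<le> 1"
    and "MC_schedulable tau crit T CL CH m"
  shows "soma_success tau crit T CL CH m (4/3)"
proof -
  note fin = assms(1) and T = assms(2) and C = assms(3) and U = assms(5)
  have U_LO: "(\<Sum>i\<in>tau. CL i / T i) \<le> real m"
    using MC_schedulable_LO_utilization[OF fin T C assms(6)] .
  have U_HI: "(\<Sum>i\<in>{i\<in>tau. crit i = HI}. CH i / T i) \<le> real m"
    using MC_schedulable_HI_utilization[OF fin T C assms(6)] .
  have C_fast: "\<forall>i\<in>{i\<in>tau. crit i = HI}.
      0 < T i \<and> 0 < CL i / (4/3) \<and> CL i / (4/3) \<le> CH i / (4/3) \<and> CH i / (4/3) \<le> T i"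
  proof
    fix i assume "i \<in> {i\<in>tau. crit i = HI}"
    then have "0 < T i" "0 < CL i" "CL i \<le> CH i" "CH i \<le> T i" using T C U by (auto simp: divide_le_eq)
    then show "0 < T i \<and> 0 < CL i / (4/3) \<and> CL i / (4/3) \<le> CH i / (4/3) \<and> CH i / (4/3) \<le> T i"
      by simp
  qed
  show ?thesis unfolding soma_success_def Let_def
  proof (intro allI impI)
    fix k assume "soma_order tau crit T (\<lambda>i. CL i / (4/3)) (\<lambda>i. CH i / (4/3)) k"
    then have k: "bij_betw k {i\<in>tau. crit i = HI} {1..card {i\<in>tau. crit i = HI}}"
      by (simp add: soma_order_def Let_def)
    then have k_le: "\<forall>i\<in>{i\<in>tau. crit i = HI}. k i \<le> card {i\<in>tau. crit i = HI}"
      by (auto dest: bij_betwE)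
    obtain thL0 thH0 thF0 w0
      where "soma_feasible tau crit T (\<lambda>i. CL i / (4/3)) (\<lambda>i. CH i / (4/3)) m k thL0 thH0 thF0 w0"
        and "(\<Sum>i\<in>tau. thL0 i) \<le> real m"
      using soma_feasible_speedup[OF fin T C _ k_le U_LO U_HI] U by blast
    then show "soma_success_with tau crit T (\<lambda>i. CL i / (4/3)) (\<lambda>i. CH i / (4/3)) m k"
      by (rule soma_success_withI[OF fin C_fast k])
  qed
qed

end
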